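(* Let $r\ge1$, let $A$ be a forest of $r$ rooted trees without free edges, let $\overline a$ carry $r$ free edges, and let $a$ be without free edges, where $a$ and $\overline a$ are both aromas or both aromatic trees. Let $\mathcal G(a,A,\overline a)$ be the set of graftings of $A$ on $\overline a$ whose result is isomorphic to $a$, and $\mathcal C(a,A,\overline a)$ the set of admissible cuts $c$ of $a$ such that $P^c(a)\cong A$ and $\overline R^c(a)\cong\overline a$. Then \[|\mathcal C(a,A,\overline a)|=\frac{\sigma(a)}{\sigma(A)\,\sigma(\overline a)}\,|\mathcal G(a,A,\overline a)|.\]
   Context: Fix a finite set $C$ of decorations. A (rooted) tree is a finite connected directed graph with $C$-decorated vertices in which each vertex has exactly one outgoing edge except the root, which has none (edges point towards the root). An aroma is a finite connected directed graph in which every vertex has exactly one outgoing edge; it contains a unique cycle. An aromatic tree is a disjoint union of one tree and finitely many aromas. An object with free edges additionally carries at each vertex $v$ a number $r_v\ge0$ of free edges. $\sigma(\cdot)$ denotes the number of automorphisms preserving decorations (and free-edge numbers). A grafting of $A$ on $\overline a$ is a map $g$ from the set of the $r$ connected components of $A$ (considered as distinct) to the vertex set of $\overline a$ such that $|g^{-1}(v)|=r_v$ for every vertex $v$; its result is obtained by adding, for each component, an edge from its root to $g(\text{component})$ and removing all free edges. An admissible cut $c$ of $a$ is a set of edges of $a$, none lying on a cycle, such that every directed path contains at most one edge of $c$. Removing the edges of $c$, $P^c(a)$ is the forest of components containing neither the root nor a cycle (each rooted at the source of its cut edge), and $R^c(a)$ is the remaining part (containing the root and all cycles); $\overline R^c(a)$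 is $R^c(a)$ with, for each cut edge $u\to w$, a free edge added at $w$. *)

theory Defs
  imports Complex_Main "HOL-Library.FuncSet"
begin

text \<open>An edge is identified with its source vertex u; it points to the vertex w
  with gpar X u = Some w.  Vertices with gpar = None are roots.
  gfree X v is the number of free edges carried by vertex v.\<close>

record ('v, 'c) agraph =
  gverts :: "'v set"
  gpar   :: "'v \<Rightarrow> 'v option"
  gdec   :: "'v \<Rightarrow> 'c"
  gfree  :: "'v \<Rightarrow> nat"

definition gedges :: "('v, 'c, 'z) agraph_scheme \<Rightarrow> ('v \<times> 'v) set" where
  "gedges X = {(u, w). u \<in> gverts X \<and> gpar X u = Some w}"

definition gwf :: "('v, 'c, 'z) agraph_scheme \<Rightarrow> bool" where
  "gwf X \<longleftrightarrow> finite (gverts X) \<and>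
     (\<forall>u \<in> gverts X. \<forall>w. gpar X u = Some w \<longrightarrow> w \<in> gverts X)"

definition groots :: "('v, 'c, 'z) agraph_scheme \<Rightarrow> 'v set" where
  "groots X = {v \<in> gverts X. gpar X v = None}"

definition no_free_edges :: "('v, 'c, 'z) agraph_scheme \<Rightarrow> bool" where
  "no_free_edges X \<longleftrightarrow> (\<forall>v \<in> gverts X. gfree X v = 0)"

definition num_free_edges :: "('v, 'c, 'z) agraph_scheme \<Rightarrow> nat" where
  "num_free_edges X = (\<Sum>v \<in> gverts X. gfree X v)"

definition is_forest :: "('v, 'c, 'z) agraph_scheme \<Rightarrow> bool" where
  "is_forest X \<longleftrightarrow> gwf X \<and> (\<forall>v \<in> gverts X. (v, v) \<notin> (gedges X)\<^sup>+)"

definition is_aroma :: "('v, 'c, 'z) agraph_scheme \<Rightarrow> bool" where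
  "is_aroma X \<longleftrightarrow> gwf X \<and> gverts X \<noteq> {} \<and> (\<forall>v \<in> gverts X. gpar X v \<noteq> None) \<and>
     (\<forall>x \<in> gverts X. \<forall>y \<in> gverts X. (x, y) \<in> (gedges X \<union> (gedges X)\<inverse>)\<^sup>*)"

text \<open>Aromatic tree: disjoint union of one tree and finitely many aromas,
  i.e. a finite graph of this kind with exactly one root.\<close>
definition is_aromatic_tree :: "('v, 'c, 'z) agraph_scheme \<Rightarrow> bool" where
  "is_aromatic_tree X \<longleftrightarrow> gwf X \<and> card (groots X) = 1"

definition giso :: "('v, 'c, 'z) agraph_scheme \<Rightarrow> ('w, 'c, 'y) agraph_scheme \<Rightarrow> ('v \<Rightarrow> 'w) \<Rightarrow> bool" where
  "giso X Y f \<longleftrightarrow> bij_betw f (gverts X) (gverts Y) \<and>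
     (\<forall>v \<in> gverts X. gpar Y (f v) = map_option f (gpar X v) \<and>
                      gdec Y (f v) = gdec X v \<and> gfree Y (f v) = gfree X v)"

definition gisomorphic :: "('v, 'c, 'z) agraph_scheme \<Rightarrow> ('w, 'c, 'y) agraph_scheme \<Rightarrow> bool" where
  "gisomorphic X Y \<longleftrightarrow> (\<exists>f. giso X Y f)"

definition sigma :: "('v, 'c, 'z) agraph_scheme \<Rightarrow> nat" where
  "sigma X = card {f. f \<in> extensional (gverts X) \<and> giso X X f}"

text \<open>Grafting: g maps the components of A (identified with their roots) to vertices
  of Ab; the result lives on the disjoint union.\<close>
definition graftings :: "('v, 'c) agraph \<Rightarrow> ('w, 'c) agraph \<Rightarrow> ('v \<Rightarrow> 'w) set" where
  "graftings A Ab = {g. g \<in> extensional (groots A) \<and> g ` groots A \<subseteq> gverts Ab \<and>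
      (\<forall>v \<in> gverts Ab. card {x \<in> groots A. g x = v} = gfree Ab v)}"

definition graft :: "('v, 'c) agraph \<Rightarrow> ('w, 'c) agraph \<Rightarrow> ('v \<Rightarrow> 'w) \<Rightarrow> ('v + 'w, 'c) agraph" where
  "graft A Ab g = \<lparr> gverts = Inl ` gverts A \<union> Inr ` gverts Ab,
     gpar = (\<lambda>x. case x of
               Inl u \<Rightarrow> (if u \<in> groots A then Some (Inr (g u)) else map_option Inl (gpar A u))
             | Inr w \<Rightarrow> map_option Inr (gpar Ab w)),
     gdec = case_sum (gdec A) (gdec Ab),
     gfree = (\<lambda>_. 0) \<rparr>"

text \<open>Admissible cuts: a set c of edges (identified by their sources), none on a
  cycle, such that no directed path contains two edges of c.\<close>
definition admissible_cut :: "('u, 'c) agraph \<Rightarrow> 'u set \<Rightarrow> bool" where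
  "admissible_cut a c \<longleftrightarrow> c \<subseteq> {u \<in> gverts a. gpar a u \<noteq> None} \<and>
     (\<forall>u \<in> c. (u, u) \<notin> (gedges a)\<^sup>+) \<and>
     (\<forall>u1 \<in> c. \<forall>u2 \<in> c. \<forall>w. gpar a u1 = Some w \<longrightarrow> (w, u2) \<notin> (gedges a)\<^sup>*)"

definition cut_pverts :: "('u, 'c) agraph \<Rightarrow> 'u set \<Rightarrow> 'u set" where
  "cut_pverts a c = {x \<in> gverts a. \<exists>u \<in> c. (x, u) \<in> {(p, q) \<in> gedges a. p \<notin> c}\<^sup>*}"

definition prune_part :: "('u, 'c) agraph \<Rightarrow> 'u set \<Rightarrow> ('u, 'c) agraph" where
  "prune_part a c = \<lparr> gverts = cut_pverts a c,
     gpar = (\<lambda>x. if x \<in> c then None else gpar a x),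
     gdec = gdec a, gfree = gfree a \<rparr>"

definition root_part_free :: "('u, 'c) agraph \<Rightarrow> 'u set \<Rightarrow> ('u, 'c) agraph" where
  "root_part_free a c = \<lparr> gverts = gverts a - cut_pverts a c,
     gpar = gpar a, gdec = gdec a,
     gfree = (\<lambda>w. gfree a w + card {u \<in> c. gpar a u = Some w}) \<rparr>"

end

theory Submission
  imports Defs
begin

text \<open>Double counting. A grafting g of A on Ab together with an isomorphism f from the
  grafted graph onto a determines the admissible cut f(roots of A), consisting of the images of
  the grafting edges, together with the isomorphisms f|A onto its pruned part and f|Ab onto its
  root part. Conversely, a cut c with isomorphisms \<alpha> from A onto P^c(a) and \<beta> from Ab onto
  R^c(a) determines the grafting that sends a root \<rho> of A to the \<beta>-preimage of the target of
  the cut edge leaving \<alpha> \<rho>, together with the isomorphism \<alpha> + \<beta>. These maps are mutually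
  inverse, so |G| \<sigma>(a) = |C| \<sigma>(A) \<sigma>(Ab).\<close>

section \<open>Isomorphisms and automorphism counts\<close>

definition isos :: "('v, 'c, 'z) agraph_scheme \<Rightarrow> ('w, 'c, 'y) agraph_scheme \<Rightarrow> ('v \<Rightarrow> 'w) set" where
  "isos X Y = {f. f \<in> extensional (gverts X) \<and> giso X Y f}"

lemma sigma_eq_card_isos: "sigma X = card (isos X X)"
  by (simp add: sigma_def isos_def)

lemma giso_mem: "giso X Y f \<Longrightarrow> x \<in> gverts X \<Longrightarrow> f x \<in> gverts Y"
  unfolding giso_def bij_betw_def by auto

lemma giso_id: "giso X X id"
  unfolding giso_def by (simp add: option.map_id)

lemma giso_comp:
  assumes "giso X Y f" and "giso Y Z h"
  shows "giso X Z (h \<circ> f)"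
proof -
  have "bij_betw (h \<circ> f) (gverts X) (gverts Z)"
    using assms unfolding giso_def by (meson bij_betw_trans)
  then show ?thesis
    using assms giso_mem[OF assms(1)] unfolding giso_def by (auto simp: option.map_comp)
qed

lemma restrict_in_isos:
  assumes "gwf X" and f: "giso X Y f"
  shows "restrict f (gverts X) \<in> isos X Y"
proof -
  have "map_option (restrict f (gverts X)) (gpar X v) = map_option f (gpar X v)" if "v \<in> gverts X" for v
    using assms that unfolding gwf_def by (cases "gpar X v") auto
  moreover have "bij_betw (restrict f (gverts X)) (gverts X) (gverts Y) \<longleftrightarrow> bij_betw f (gverts X) (gverts Y)"
    by (rule bij_betw_cong) simp
  ultimately show ?thesis
    using f unfolding isos_def giso_def by simp
qed

lemma giso_inv_into:
  assumes f: "giso X Y f" and "gwf X"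
  shows "giso Y X (inv_into (gverts X) f)"
proof -
  have bij: "bij_betw f (gverts X) (gverts Y)"
    using f unfolding giso_def by auto
  have "gpar X (inv_into (gverts X) f (f x)) = map_option (inv_into (gverts X) f) (gpar Y (f x))
     \<and> gdec X (inv_into (gverts X) f (f x)) = gdec Y (f x)
     \<and> gfree X (inv_into (gverts X) f (f x)) = gfree Y (f x)" if x: "x \<in> gverts X" for x
  proof -
    have "map_option (inv_into (gverts X) f) (map_option f (gpar X x)) = gpar X x"
      using \<open>gwf X\<close> x bij unfolding gwf_def bij_betw_def by (cases "gpar X x") (auto simp: inv_into_f_f)
    then show ?thesis
      using f x bij unfolding giso_def bij_betw_def by (simp add: inv_into_f_f)
  qed
  moreover have "bij_betw (inv_into (gverts X) f) (gverts Y) (gverts X)"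
    using bij by (rule bij_betw_inv_into)
  ultimately show ?thesis
    using bij unfolding giso_def bij_betw_def by (metis (no_types, lifting) imageE)
qed

lemma gisomorphic_sym: "gwf X \<Longrightarrow> gisomorphic X Y \<Longrightarrow> gisomorphic Y X"
  unfolding gisomorphic_def by (meson giso_inv_into)

lemma isos_eq_empty: "\<not> gisomorphic X Y \<Longrightarrow> isos X Y = {}"
  unfolding isos_def gisomorphic_def by blast

lemma finite_isos:
  assumes "finite (gverts X)" and "finite (gverts Y)"
  shows "finite (isos X Y)"
proof (rule finite_subset)
  show "isos X Y \<subseteq> gverts X \<rightarrow>\<^sub>E gverts Y"
    unfolding isos_def using giso_mem by (auto simp: PiE_def Pi_def)
  show "finite (gverts X \<rightarrow>\<^sub>E gverts Y)"
    using assms by (rule finite_PiE)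
qed

lemma sigma_pos:
  assumes "gwf X"
  shows "sigma X > 0"
proof -
  have "restrict id (gverts X) \<in> isos X X"
    using restrict_in_isos[OF assms giso_id] .
  moreover have "finite (isos X X)"
    using assms finite_isos unfolding gwf_def by auto
  ultimately show ?thesis
    unfolding sigma_eq_card_isos by (auto simp: card_gt_0_iff)
qed

lemma card_isos_dom:
  assumes "gwf X"
  shows "card (isos X Y) = (if gisomorphic X Y then sigma X else 0)"
proof (cases "gisomorphic X Y")
  case True
  then obtain h where h: "giso X Y h"
    unfolding gisomorphic_def by blast
  let ?V = "gverts X" and ?h' = "inv_into (gverts X) h"
  have bij: "bij_betw h ?V (gverts Y)"
    using h unfolding giso_def by auto
  have "bij_betw (\<lambda>\<phi>. restrict (h \<circ> \<phi>) ?V) (isos X X) (isos X Y)"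
  proof (rule bij_betw_byWitness[where f' = "\<lambda>\<psi>. restrict (?h' \<circ> \<psi>) ?V"])
    show "\<forall>\<phi> \<in> isos X X. restrict (?h' \<circ> restrict (h \<circ> \<phi>) ?V) ?V = \<phi>"
    proof
      fix \<phi> assume \<phi>: "\<phi> \<in> isos X X"
      then have "\<phi> x \<in> ?V" if "x \<in> ?V" for x
        using that giso_mem[of X X \<phi>] unfolding isos_def by blast
      then show "restrict (?h' \<circ> restrict (h \<circ> \<phi>) ?V) ?V = \<phi>"
        using \<phi> bij unfolding isos_def bij_betw_def
        by (auto simp: fun_eq_iff inv_into_f_f extensional_def)
    qed
    show "\<forall>\<psi> \<in> isos X Y. restrict (h \<circ> restrict (?h' \<circ> \<psi>) ?V) ?V = \<psi>"
    proof
      fix \<psi> assume \<psi>: "\<psi> \<in> isos X Y"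
      then have "\<psi> x \<in> h ` ?V" if "x \<in> ?V" for x
        using that giso_mem[of X Y \<psi>] bij unfolding isos_def bij_betw_def by blast
      then show "restrict (h \<circ> restrict (?h' \<circ> \<psi>) ?V) ?V = \<psi>"
        using \<psi> unfolding isos_def by (auto simp: fun_eq_iff f_inv_into_f extensional_def)
    qed
    show "(\<lambda>\<phi>. restrict (h \<circ> \<phi>) ?V) ` isos X X \<subseteq> isos X Y"
      by (rule image_subsetI, rule restrict_in_isos[OF assms], rule giso_comp[OF _ h]) (simp add: isos_def)
    show "(\<lambda>\<psi>. restrict (?h' \<circ> \<psi>) ?V) ` isos X Y \<subseteq> isos X X"
      by (rule image_subsetI, rule restrict_in_isos[OF assms], rule giso_comp[OF _ giso_inv_into[OF h assms]])
        (simp add: isos_def)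
  qed
  then show ?thesis
    using True by (simp add: sigma_eq_card_isos bij_betw_same_card)
qed (simp add: isos_eq_empty)

lemma card_isos_cod:
  assumes "gwf X" and "gwf Y"
  shows "card (isos X Y) = (if gisomorphic X Y then sigma Y else 0)"
proof (cases "gisomorphic X Y")
  case True
  then obtain h where h: "giso X Y h"
    unfolding gisomorphic_def by blast
  let ?V = "gverts X" and ?W = "gverts Y" and ?h' = "inv_into (gverts X) h"
  have bij: "bij_betw h ?V ?W"
    using h unfolding giso_def by auto
  have "bij_betw (\<lambda>\<psi>. restrict (\<psi> \<circ> h) ?V) (isos Y Y) (isos X Y)"
  proof (rule bij_betw_byWitness[where f' = "\<lambda>\<phi>. restrict (\<phi> \<circ> ?h') ?W"])
    have h'_inv: "?h' y \<in> ?V \<and> h (?h' y) = y" if "y \<in> ?W" for y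
      using that bij unfolding bij_betw_def by (simp add: inv_into_into f_inv_into_f)
    show "\<forall>\<psi> \<in> isos Y Y. restrict (restrict (\<psi> \<circ> h) ?V \<circ> ?h') ?W = \<psi>"
    proof
      fix \<psi> assume "\<psi> \<in> isos Y Y"
      then show "restrict (restrict (\<psi> \<circ> h) ?V \<circ> ?h') ?W = \<psi>"
        using h'_inv unfolding isos_def by (auto simp: fun_eq_iff extensional_def)
    qed
    have h_inv: "h x \<in> ?W \<and> ?h' (h x) = x" if "x \<in> ?V" for x
      using that bij by (simp add: bij_betw_def inv_into_f_f bij_betw_apply)
    show "\<forall>\<phi> \<in> isos X Y. restrict (restrict (\<phi> \<circ> ?h') ?W \<circ> h) ?V = \<phi>"
    proof
      fix \<phi> assume "\<phi> \<in> isos X Y"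
      then show "restrict (restrict (\<phi> \<circ> ?h') ?W \<circ> h) ?V = \<phi>"
        using h_inv unfolding isos_def by (auto simp: fun_eq_iff extensional_def)
    qed
    show "(\<lambda>\<psi>. restrict (\<psi> \<circ> h) ?V) ` isos Y Y \<subseteq> isos X Y"
      by (rule image_subsetI, rule restrict_in_isos[OF assms(1)], rule giso_comp[OF h]) (simp add: isos_def)
    show "(\<lambda>\<phi>. restrict (\<phi> \<circ> ?h') ?W) ` isos X Y \<subseteq> isos Y Y"
      by (rule image_subsetI, rule restrict_in_isos[OF assms(2)], rule giso_comp[OF giso_inv_into[OF h assms(1)]])
        (simp add: isos_def)
  qed
  then show ?thesis
    using True by (simp add: sigma_eq_card_isos bij_betw_same_card)
qed (simp add: isos_eq_empty)

section \<open>Graftings and cuts\<close>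

lemma bij_betw_case_sum:
  assumes "bij_betw f A C" and "bij_betw g B D" and "C \<inter> D = {}"
  shows "bij_betw (case_sum f g) (Inl ` A \<union> Inr ` B) (C \<union> D)"
proof (rule bij_betw_combine)
  show "bij_betw (case_sum f g) (Inl ` A) C"
    using assms(1) by (auto simp: bij_betw_def inj_on_def image_image)
  show "bij_betw (case_sum f g) (Inr ` B) D"
    using assms(2) by (auto simp: bij_betw_def inj_on_def image_image)
qed (rule assms(3))

lemma graft_simps:
  "gverts (graft A Ab g) = Inl ` gverts A \<union> Inr ` gverts Ab"
  "gpar (graft A Ab g) (Inl u) = (if u \<in> groots A then Some (Inr (g u)) else map_option Inl (gpar A u))"
  "gpar (graft A Ab g) (Inr w) = map_option Inr (gpar Ab w)"
  "gdec (graft A Ab g) (Inl u) = gdec A u"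
  "gdec (graft A Ab g) (Inr w) = gdec Ab w"
  "gfree (graft A Ab g) x = 0"
  by (simp_all add: graft_def)

lemma groots_imp_gverts: "\<rho> \<in> groots X \<Longrightarrow> \<rho> \<in> gverts X"
  unfolding groots_def by auto

lemma gwf_graft:
  assumes "gwf A" and "gwf Ab" and "g \<in> graftings A Ab"
  shows "gwf (graft A Ab g)"
proof -
  have "x' \<in> gverts (graft A Ab g)" if "x \<in> gverts (graft A Ab g)" and "gpar (graft A Ab g) x = Some x'" for x x'
  proof (cases x)
    case (Inl u)
    then show ?thesis
      using that assms unfolding gwf_def graftings_def by (auto simp: graft_simps split: if_splits)
  next
    case (Inr w)
    then show ?thesis
      using that assms unfolding gwf_def by (auto simp: graft_simps)
  qed
  then show ?thesis
    using assms unfolding gwf_def by (auto simp: graft_simps)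
qed

lemma finite_graftings:
  assumes "finite (gverts A)" and "finite (gverts Ab)"
  shows "finite (graftings A Ab)"
proof (rule finite_subset)
  show "graftings A Ab \<subseteq> groots A \<rightarrow>\<^sub>E gverts Ab"
    unfolding graftings_def by (auto simp: PiE_def Pi_def)
  show "finite (groots A \<rightarrow>\<^sub>E gverts Ab)"
    using assms groots_imp_gverts by (meson finite_PiE finite_subset subsetI)
qed

lemma forest_reaches_root:
  assumes forest: "is_forest A" and v: "v \<in> gverts A"
  shows "\<exists>\<rho> \<in> groots A. (v, \<rho>) \<in> (gedges A)\<^sup>*"
proof -
  have "gedges A \<subseteq> gverts A \<times> gverts A" and "finite (gverts A)"
    using forest unfolding is_forest_def gwf_def gedges_def by auto
  then have "finite (gedges A)"
    by (meson finite_SigmaI finite_subset)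
  moreover have "acyclic (gedges A)"
  proof (unfold acyclic_def, intro allI notI)
    fix x assume cycle: "(x, x) \<in> (gedges A)\<^sup>+"
    then have "x \<in> gverts A"
      unfolding gedges_def by (auto dest: tranclD)
    then show False
      using cycle forest unfolding is_forest_def by blast
  qed
  ultimately have "wf ((gedges A)\<inverse>)"
    by (rule finite_acyclic_wf_converse)
  then show ?thesis
    using v
  proof (induction v rule: wf_induct_rule)
    case (less v)
    show ?case
    proof (cases "gpar A v")
      case None
      then show ?thesis
        using less.prems unfolding groots_def by auto
    next
      case (Some y)
      then have edge: "(v, y) \<in> gedges A" and "y \<in> gverts A"
        using less.prems forest unfolding gedges_def is_forest_def gwf_def by auto
      then obtain \<rho> where "\<rho> \<in> groots A" "(y, \<rho>) \<in> (gedges A)\<^sup>*"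
        using less.IH by blast
      then show ?thesis
        using edge by (meson converse_rtrancl_into_rtrancl)
    qed
  qed
qed

definition uncut_edges :: "('u, 'c) agraph \<Rightarrow> 'u set \<Rightarrow> ('u \<times> 'u) set" where
  "uncut_edges a c = {(p, q) \<in> gedges a. p \<notin> c}"

lemma cut_pverts_uncut_edges: "cut_pverts a c = {x \<in> gverts a. \<exists>u \<in> c. (x, u) \<in> (uncut_edges a c)\<^sup>*}"
  unfolding cut_pverts_def uncut_edges_def by simp

lemma cut_pverts_subset: "cut_pverts a c \<subseteq> gverts a"
  unfolding cut_pverts_def by auto

lemma admissible_cut_subset_cut_pverts: "admissible_cut a c \<Longrightarrow> c \<subseteq> cut_pverts a c"
  unfolding cut_pverts_def admissible_cut_def by auto

lemma uncut_path_imp_path: "(x, y) \<in> (uncut_edges a c)\<^sup>* \<Longrightarrow> (x, y) \<in> (gedges a)\<^sup>*"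
  unfolding uncut_edges_def by (erule rtrancl_mono[THEN subsetD, rotated]) auto

lemma cut_pverts_parent:
  assumes "gwf a" and x: "x \<in> cut_pverts a c" and "x \<notin> c"
  shows "\<exists>y. gpar a x = Some y \<and> y \<in> cut_pverts a c"
proof -
  obtain u where u: "u \<in> c" "(x, u) \<in> (uncut_edges a c)\<^sup>*"
    using x unfolding cut_pverts_uncut_edges by auto
  then obtain y where xy: "(x, y) \<in> uncut_edges a c" and "(y, u) \<in> (uncut_edges a c)\<^sup>*"
    using \<open>x \<notin> c\<close> by (metis converse_rtranclE)
  moreover have "gpar a x = Some y" and "y \<in> gverts a"
    using xy \<open>gwf a\<close> unfolding uncut_edges_def gedges_def gwf_def by auto
  ultimately show ?thesis
    using u unfolding cut_pverts_uncut_edges by auto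
qed

lemma gwf_prune_part:
  assumes "gwf a"
  shows "gwf (prune_part a c)"
proof -
  have "finite (cut_pverts a c)"
    using assms unfolding gwf_def cut_pverts_def by auto
  moreover have "y \<in> cut_pverts a c"
    if "x \<in> cut_pverts a c" and "x \<notin> c" and "gpar a x = Some y" for x y
    using cut_pverts_parent[OF assms that(1,2)] that(3) by auto
  ultimately show ?thesis
    unfolding gwf_def prune_part_def by auto
qed

lemma gwf_root_part_free:
  assumes "gwf a"
  shows "gwf (root_part_free a c)"
proof -
  have "y \<notin> cut_pverts a c"
    if x: "x \<in> gverts a" "x \<notin> cut_pverts a c" and "gpar a x = Some y" for x y
  proof
    assume "y \<in> cut_pverts a c"
    then obtain u where "u \<in> c" "(y, u) \<in> (uncut_edges a c)\<^sup>*"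
      unfolding cut_pverts_uncut_edges by auto
    moreover have "x \<notin> c"
      using x unfolding cut_pverts_uncut_edges by auto
    then have "(x, y) \<in> uncut_edges a c"
      using x \<open>gpar a x = Some y\<close> unfolding uncut_edges_def gedges_def by auto
    ultimately show False
      using x unfolding cut_pverts_uncut_edges by (blast intro: converse_rtrancl_into_rtrancl)
  qed
  then show ?thesis
    using assms unfolding gwf_def root_part_free_def by auto
qed

lemma finite_admissible_cuts: "finite (gverts a) \<Longrightarrow> finite {c. admissible_cut a c}"
  unfolding admissible_cut_def by (rule finite_subset[of _ "Pow (gverts a)"]) auto

section \<open>The correspondence between graftings and cuts\<close>

definition grafting_of_cut :: "('v, 'c) agraph \<Rightarrow> ('w, 'c) agraph \<Rightarrow> ('u, 'c) agraph \<Rightarrow>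
    ('v \<Rightarrow> 'u) \<Rightarrow> ('w \<Rightarrow> 'u) \<Rightarrow> 'v \<Rightarrow> 'w" where
  "grafting_of_cut A Ab a \<alpha> \<beta> = restrict (\<lambda>\<rho>. inv_into (gverts Ab) \<beta> (the (gpar a (\<alpha> \<rho>)))) (groots A)"

locale grafting_iso =
  fixes A :: "('v, 'c) agraph" and Ab :: "('w, 'c) agraph" and a :: "('u, 'c) agraph"
    and g :: "'v \<Rightarrow> 'w" and f :: "'v + 'w \<Rightarrow> 'u"
  assumes forest_A: "is_forest A" and no_free_A: "no_free_edges A" and gwf_Ab: "gwf Ab"
    and no_free_a: "no_free_edges a"
    and grafting: "g \<in> graftings A Ab" and iso: "f \<in> isos (graft A Ab g) a"
begin

abbreviation graft_cut :: "'u set" where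
  "graft_cut \<equiv> f ` Inl ` groots A"

lemma giso_f: "giso (graft A Ab g) a f"
  using iso unfolding isos_def by simp

lemma bij_f: "bij_betw f (Inl ` gverts A \<union> Inr ` gverts Ab) (gverts a)"
  using giso_f unfolding giso_def by (simp add: graft_simps)

lemma gverts_a: "gverts a = f ` Inl ` gverts A \<union> f ` Inr ` gverts Ab"
  using bij_f unfolding bij_betw_def by (auto simp: image_Un)

lemma f_Inl_mem: "v \<in> gverts A \<Longrightarrow> f (Inl v) \<in> gverts a"
  and f_Inr_mem: "w \<in> gverts Ab \<Longrightarrow> f (Inr w) \<in> gverts a"
  using gverts_a by auto

lemma f_Inl_neq_f_Inr: "v \<in> gverts A \<Longrightarrow> w \<in> gverts Ab \<Longrightarrow> f (Inl v) \<noteq> f (Inr w)"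
  using bij_f unfolding bij_betw_def inj_on_def by blast

lemma inj_on_f_Inl: "inj_on (f \<circ> Inl) (gverts A)"
  and inj_on_f_Inr: "inj_on (f \<circ> Inr) (gverts Ab)"
  using bij_f unfolding bij_betw_def inj_on_def by auto

lemma gpar_f:
  "x \<in> Inl ` gverts A \<union> Inr ` gverts Ab \<Longrightarrow> gpar a (f x) = map_option f (gpar (graft A Ab g) x)"
  using giso_f unfolding giso_def by (simp add: graft_simps)

lemma gpar_f_Inl_root: "\<rho> \<in> groots A \<Longrightarrow> gpar a (f (Inl \<rho>)) = Some (f (Inr (g \<rho>)))"
  using gpar_f[of "Inl \<rho>"] groots_imp_gverts[of \<rho> A] by (auto simp: graft_simps)

lemma gpar_f_Inl:
  "v \<in> gverts A \<Longrightarrow> v \<notin> groots A \<Longrightarrow> gpar a (f (Inl v)) = map_option (f \<circ> Inl) (gpar A v)"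
  using gpar_f[of "Inl v"] by (simp add: graft_simps option.map_comp)

lemma gpar_f_Inr: "w \<in> gverts Ab \<Longrightarrow> gpar a (f (Inr w)) = map_option (f \<circ> Inr) (gpar Ab w)"
  using gpar_f[of "Inr w"] by (simp add: graft_simps option.map_comp)

lemma gdec_f_Inl: "v \<in> gverts A \<Longrightarrow> gdec a (f (Inl v)) = gdec A v"
  and gdec_f_Inr: "w \<in> gverts Ab \<Longrightarrow> gdec a (f (Inr w)) = gdec Ab w"
  using giso_f unfolding giso_def by (auto simp: graft_simps)

lemma g_mem: "\<rho> \<in> groots A \<Longrightarrow> g \<rho> \<in> gverts Ab"
  using grafting unfolding graftings_def by auto

lemma path_from_f_Inr:
  assumes "(f (Inr w), y) \<in> (gedges a)\<^sup>*" and "w \<in> gverts Ab"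
  shows "y \<in> f ` Inr ` gverts Ab"
  using assms
proof (induction rule: rtrancl_induct)
  case (step y z)
  then obtain w' where w': "w' \<in> gverts Ab" "y = f (Inr w')"
    by auto
  then obtain w'' where "gpar Ab w' = Some w''" "z = f (Inr w'')"
    using step.hyps(2) gpar_f_Inr[OF w'(1)] unfolding gedges_def by auto
  then show ?case
    using gwf_Ab w'(1) unfolding gwf_def by auto
qed simp

lemma admissible_graft_cut: "admissible_cut a graft_cut"
  unfolding admissible_cut_def
proof (intro conjI ballI allI impI)
  show "graft_cut \<subseteq> {u \<in> gverts a. gpar a u \<noteq> None}"
    using gpar_f_Inl_root f_Inl_mem[OF groots_imp_gverts] by auto
next
  fix u assume "u \<in> graft_cut"
  then obtain \<rho> where \<rho>: "\<rho> \<in> groots A" "u = f (Inl \<rho>)"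
    by auto
  show "(u, u) \<notin> (gedges a)\<^sup>+"
  proof
    assume "(u, u) \<in> (gedges a)\<^sup>+"
    then obtain z where "(u, z) \<in> gedges a" "(z, u) \<in> (gedges a)\<^sup>*"
      by (meson tranclD)
    then have "(f (Inr (g \<rho>)), u) \<in> (gedges a)\<^sup>*"
      using gpar_f_Inl_root[OF \<rho>(1)] \<rho>(2) unfolding gedges_def by auto
    then have "u \<in> f ` Inr ` gverts Ab"
      using path_from_f_Inr g_mem[OF \<rho>(1)] by blast
    then show False
      using f_Inl_neq_f_Inr[OF groots_imp_gverts[OF \<rho>(1)]] \<rho>(2) by auto
  qed
next
  fix u1 u2 w
  assume "u1 \<in> graft_cut" "u2 \<in> graft_cut" and w: "gpar a u1 = Some w"
  then obtain \<rho>1 \<rho>2 where \<rho>: "\<rho>1 \<in> groots A" "u1 = f (Inl \<rho>1)" "\<rho>2 \<in> groots A" "u2 = f (Inl \<rho>2)"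
    by auto
  show "(w, u2) \<notin> (gedges a)\<^sup>*"
  proof
    assume "(w, u2) \<in> (gedges a)\<^sup>*"
    then have "u2 \<in> f ` Inr ` gverts Ab"
      using path_from_f_Inr[OF _ g_mem[OF \<rho>(1)]] gpar_f_Inl_root[OF \<rho>(1)] w \<rho>(2) by auto
    then show False
      using f_Inl_neq_f_Inr[OF groots_imp_gverts[OF \<rho>(3)]] \<rho>(4) by auto
  qed
qed

lemma f_Inl_notin_graft_cut: "v \<in> gverts A \<Longrightarrow> v \<notin> groots A \<Longrightarrow> f (Inl v) \<notin> graft_cut"
proof
  assume "v \<in> gverts A" "v \<notin> groots A" "f (Inl v) \<in> graft_cut"
  then obtain \<rho> where "\<rho> \<in> groots A" "f (Inl v) = f (Inl \<rho>)"
    by auto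
  then show False
    using inj_on_f_Inl groots_imp_gverts[of \<rho> A] \<open>v \<in> gverts A\<close> \<open>v \<notin> groots A\<close>
    unfolding inj_on_def by auto
qed

lemma uncut_path_f_Inl:
  assumes "(x, y) \<in> (gedges A)\<^sup>*"
  shows "(f (Inl x), f (Inl y)) \<in> (uncut_edges a graft_cut)\<^sup>*"
  using assms
proof (induction rule: rtrancl_induct)
  case (step y z)
  then have y: "y \<in> gverts A" "gpar A y = Some z" "y \<notin> groots A"
    unfolding gedges_def groots_def by auto
  then have "(f (Inl y), f (Inl z)) \<in> uncut_edges a graft_cut"
    using gpar_f_Inl f_Inl_mem f_Inl_notin_graft_cut unfolding uncut_edges_def gedges_def by auto
  then show ?case
    by (rule rtrancl_into_rtrancl[OF step.IH])
qed simp

lemma cut_pverts_graft_cut: "cut_pverts a graft_cut = f ` Inl ` gverts A"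
proof
  show "f ` Inl ` gverts A \<subseteq> cut_pverts a graft_cut"
  proof
    fix x assume "x \<in> f ` Inl ` gverts A"
    then obtain v where v: "v \<in> gverts A" "x = f (Inl v)"
      by auto
    moreover obtain \<rho> where "\<rho> \<in> groots A" "(v, \<rho>) \<in> (gedges A)\<^sup>*"
      using forest_reaches_root[OF forest_A v(1)] by blast
    ultimately show "x \<in> cut_pverts a graft_cut"
      using uncut_path_f_Inl[of v \<rho>] f_Inl_mem[of v] unfolding cut_pverts_uncut_edges by blast
  qed
  show "cut_pverts a graft_cut \<subseteq> f ` Inl ` gverts A"
  proof
    fix x assume "x \<in> cut_pverts a graft_cut"
    then obtain u where "u \<in> graft_cut" and path: "(x, u) \<in> (uncut_edges a graft_cut)\<^sup>*"
      unfolding cut_pverts_uncut_edges by auto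
    then obtain \<rho> where \<rho>: "\<rho> \<in> groots A" "u = f (Inl \<rho>)"
      by auto
    then have "u \<notin> f ` Inr ` gverts Ab"
      using f_Inl_neq_f_Inr[OF groots_imp_gverts] by auto
    then have "x \<notin> f ` Inr ` gverts Ab"
      using path_from_f_Inr uncut_path_imp_path[OF path] by auto
    moreover have "x \<in> gverts a"
      using path f_Inl_mem[OF groots_imp_gverts[OF \<rho>(1)]] \<rho>(2)
      unfolding uncut_edges_def gedges_def by (auto elim: converse_rtranclE)
    ultimately show "x \<in> f ` Inl ` gverts A"
      using gverts_a by blast
  qed
qed

lemma giso_prune_part: "giso A (prune_part a graft_cut) (f \<circ> Inl)"
  unfolding giso_def
proof (intro conjI ballI)
  show "bij_betw (f \<circ> Inl) (gverts A) (gverts (prune_part a graft_cut))"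
    using inj_on_f_Inl cut_pverts_graft_cut unfolding bij_betw_def prune_part_def by (simp add: image_comp)
next
  fix v assume v: "v \<in> gverts A"
  show "gpar (prune_part a graft_cut) ((f \<circ> Inl) v) = map_option (f \<circ> Inl) (gpar A v)"
  proof (cases "v \<in> groots A")
    case True
    then show ?thesis
      unfolding prune_part_def groots_def by auto
  next
    case False
    then show ?thesis
      using f_Inl_notin_graft_cut[OF v False] gpar_f_Inl[OF v False] unfolding prune_part_def by simp
  qed
  show "gdec (prune_part a graft_cut) ((f \<circ> Inl) v) = gdec A v"
    using gdec_f_Inl[OF v] unfolding prune_part_def by simp
  show "gfree (prune_part a graft_cut) ((f \<circ> Inl) v) = gfree A v"
    using no_free_a no_free_A f_Inl_mem[OF v] v unfolding prune_part_def no_free_edges_def by simp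
qed

lemma card_cut_edges_into_f_Inr:
  assumes w: "w \<in> gverts Ab"
  shows "card {u \<in> graft_cut. gpar a u = Some (f (Inr w))} = gfree Ab w"
proof -
  have "card {u \<in> graft_cut. gpar a u = Some (f (Inr w))}
    = card ((f \<circ> Inl) ` {\<rho> \<in> groots A. g \<rho> = w})"
  proof (rule arg_cong[where f = card], intro equalityI subsetI)
    fix u assume "u \<in> {u \<in> graft_cut. gpar a u = Some (f (Inr w))}"
    then obtain \<rho> where \<rho>: "\<rho> \<in> groots A" "u = f (Inl \<rho>)" and "f (Inr (g \<rho>)) = f (Inr w)"
      using gpar_f_Inl_root by auto
    then have "g \<rho> = w"
      using inj_on_f_Inr g_mem[OF \<rho>(1)] w unfolding inj_on_def by auto
    then show "u \<in> (f \<circ> Inl) ` {\<rho> \<in> groots A. g \<rho> = w}"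
      using \<rho> by auto
  qed (auto simp: gpar_f_Inl_root)
  also have "\<dots> = card {\<rho> \<in> groots A. g \<rho> = w}"
    by (rule card_image, rule inj_on_subset[OF inj_on_f_Inl]) (auto dest: groots_imp_gverts)
  also have "\<dots> = gfree Ab w"
    using grafting w unfolding graftings_def by auto
  finally show ?thesis .
qed

lemma giso_root_part_free: "giso Ab (root_part_free a graft_cut) (f \<circ> Inr)"
  unfolding giso_def
proof (intro conjI ballI)
  have "gverts a - f ` Inl ` gverts A = f ` Inr ` gverts Ab"
    using gverts_a f_Inl_neq_f_Inr by blast
  then show "bij_betw (f \<circ> Inr) (gverts Ab) (gverts (root_part_free a graft_cut))"
    using inj_on_f_Inr cut_pverts_graft_cut unfolding bij_betw_def root_part_free_def by (simp add: image_comp)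
next
  fix w assume w: "w \<in> gverts Ab"
  show "gpar (root_part_free a graft_cut) ((f \<circ> Inr) w) = map_option (f \<circ> Inr) (gpar Ab w)"
    using gpar_f_Inr[OF w] unfolding root_part_free_def by simp
  show "gdec (root_part_free a graft_cut) ((f \<circ> Inr) w) = gdec Ab w"
    using gdec_f_Inr[OF w] unfolding root_part_free_def by simp
  show "gfree (root_part_free a graft_cut) ((f \<circ> Inr) w) = gfree Ab w"
    using no_free_a f_Inr_mem[OF w] card_cut_edges_into_f_Inr[OF w]
    unfolding root_part_free_def no_free_edges_def by simp
qed

lemma grafting_of_cut_graft:
  "grafting_of_cut A Ab a (restrict (f \<circ> Inl) (gverts A)) (restrict (f \<circ> Inr) (gverts Ab)) = g"
proof
  fix \<rho>
  show "grafting_of_cut A Ab a (restrict (f \<circ> Inl) (gverts A)) (restrict (f \<circ> Inr) (gverts Ab)) \<rho> = g \<rho>"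
  proof (cases "\<rho> \<in> groots A")
    case True
    have "inj_on (restrict (f \<circ> Inr) (gverts Ab)) (gverts Ab)"
      using inj_on_f_Inr by (simp add: inj_on_def)
    then show ?thesis
      using True gpar_f_Inl_root[OF True] groots_imp_gverts[OF True] g_mem[OF True]
      unfolding grafting_of_cut_def by (simp add: inv_into_f_eq)
  next
    case False
    then show ?thesis
      using grafting unfolding grafting_of_cut_def graftings_def by (auto simp: extensional_def)
  qed
qed

lemma restrict_case_sum_f:
  "restrict (case_sum (restrict (f \<circ> Inl) (gverts A)) (restrict (f \<circ> Inr) (gverts Ab)))
    (Inl ` gverts A \<union> Inr ` gverts Ab) = f"
proof
  fix x
  show "restrict (case_sum (restrict (f \<circ> Inl) (gverts A)) (restrict (f \<circ> Inr) (gverts Ab)))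
    (Inl ` gverts A \<union> Inr ` gverts Ab) x = f x"
    using iso by (cases x) (auto simp: isos_def extensional_def graft_simps)
qed

end

locale cut_iso =
  fixes A :: "('v, 'c) agraph" and Ab :: "('w, 'c) agraph" and a :: "('u, 'c) agraph"
    and c :: "'u set" and \<alpha> :: "'v \<Rightarrow> 'u" and \<beta> :: "'w \<Rightarrow> 'u"
  assumes gwf_a: "gwf a" and no_free_a: "no_free_edges a" and admissible: "admissible_cut a c"
    and \<alpha>_isos: "\<alpha> \<in> isos A (prune_part a c)" and \<beta>_isos: "\<beta> \<in> isos Ab (root_part_free a c)"
begin

lemma iso_prune: "giso A (prune_part a c) \<alpha>"
  and iso_root: "giso Ab (root_part_free a c) \<beta>"
  using \<alpha>_isos \<beta>_isos unfolding isos_def by simp_all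

abbreviation cut_grafting :: "'v \<Rightarrow> 'w" where
  "cut_grafting \<equiv> grafting_of_cut A Ab a \<alpha> \<beta>"

lemma bij_\<alpha>: "bij_betw \<alpha> (gverts A) (cut_pverts a c)"
  using iso_prune unfolding giso_def prune_part_def by simp

lemma bij_\<beta>: "bij_betw \<beta> (gverts Ab) (gverts a - cut_pverts a c)"
  using iso_root unfolding giso_def root_part_free_def by simp

lemma gpar_\<alpha>: "v \<in> gverts A \<Longrightarrow> gpar (prune_part a c) (\<alpha> v) = map_option \<alpha> (gpar A v)"
  using iso_prune unfolding giso_def by simp

lemma image_\<alpha>_groots: "\<alpha> ` groots A = c"
proof (intro equalityI subsetI)
  fix x assume "x \<in> \<alpha> ` groots A"
  then obtain \<rho> where \<rho>: "\<rho> \<in> groots A" "x = \<alpha> \<rho>"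
    by auto
  then have "x \<in> cut_pverts a c" and "gpar (prune_part a c) x = None"
    using bij_\<alpha> gpar_\<alpha> groots_imp_gverts[OF \<rho>(1)] unfolding bij_betw_def groots_def by auto
  show "x \<in> c"
  proof (rule ccontr)
    assume "x \<notin> c"
    then obtain y where "gpar a x = Some y"
      using cut_pverts_parent[OF gwf_a \<open>x \<in> cut_pverts a c\<close>] by blast
    then show False
      using \<open>gpar (prune_part a c) x = None\<close> \<open>x \<notin> c\<close> unfolding prune_part_def by simp
  qed
next
  fix u assume u: "u \<in> c"
  then obtain v where v: "v \<in> gverts A" "u = \<alpha> v"
    using admissible_cut_subset_cut_pverts[OF admissible] bij_\<alpha> unfolding bij_betw_def by auto
  then have "gpar A v = None"
    using gpar_\<alpha>[OF v(1)] u unfolding prune_part_def by simp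
  then show "u \<in> \<alpha> ` groots A"
    using v unfolding groots_def by auto
qed

lemma cut_edge_target:
  assumes "u \<in> c"
  obtains w where "gpar a u = Some w" and "w \<in> gverts a - cut_pverts a c"
proof -
  obtain w where w: "gpar a u = Some w"
    using admissible assms unfolding admissible_cut_def by auto
  have "w \<in> gverts a"
    using admissible assms w gwf_a unfolding admissible_cut_def gwf_def by auto
  moreover have "w \<notin> cut_pverts a c"
  proof
    assume "w \<in> cut_pverts a c"
    then obtain u' where "u' \<in> c" and "(w, u') \<in> (uncut_edges a c)\<^sup>*"
      unfolding cut_pverts_uncut_edges by auto
    then have "(w, u') \<in> (gedges a)\<^sup>*"
      by (simp add: uncut_path_imp_path)
    then show False
      using admissible assms w \<open>u' \<in> c\<close> unfolding admissible_cut_def by blast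
  qed
  ultimately show ?thesis
    using w that by blast
qed

lemma gpar_\<alpha>_root:
  assumes \<rho>: "\<rho> \<in> groots A"
  shows "cut_grafting \<rho> \<in> gverts Ab" and "gpar a (\<alpha> \<rho>) = Some (\<beta> (cut_grafting \<rho>))"
proof -
  have "\<alpha> \<rho> \<in> c"
    using image_\<alpha>_groots \<rho> by blast
  then obtain w where w: "gpar a (\<alpha> \<rho>) = Some w" "w \<in> gverts a - cut_pverts a c"
    by (rule cut_edge_target)
  then obtain v where v: "v \<in> gverts Ab" "w = \<beta> v"
    using bij_\<beta> unfolding bij_betw_def by auto
  have "cut_grafting \<rho> = v"
    unfolding grafting_of_cut_def using \<rho> w v bij_\<beta> by (simp add: bij_betw_def inv_into_f_f)
  then show "cut_grafting \<rho> \<in> gverts Ab" and "gpar a (\<alpha> \<rho>) = Some (\<beta> (cut_grafting \<rho>))"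
    using w v by auto
qed

lemma card_cut_edges_into_\<beta>:
  assumes "v \<in> gverts Ab"
  shows "card {u \<in> c. gpar a u = Some (\<beta> v)} = gfree Ab v"
proof -
  have "\<beta> v \<in> gverts a"
    using bij_\<beta> assms unfolding bij_betw_def by auto
  then have "gfree (root_part_free a c) (\<beta> v) = card {u \<in> c. gpar a u = Some (\<beta> v)}"
    using no_free_a unfolding root_part_free_def no_free_edges_def by simp
  moreover have "gfree (root_part_free a c) (\<beta> v) = gfree Ab v"
    using iso_root assms unfolding giso_def by simp
  ultimately show ?thesis
    by simp
qed

lemma cut_grafting_in_graftings: "cut_grafting \<in> graftings A Ab"
  unfolding graftings_def
proof (intro CollectI conjI ballI)
  show "cut_grafting \<in> extensional (groots A)"
    unfolding grafting_of_cut_def by simp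
  show "cut_grafting ` groots A \<subseteq> gverts Ab"
    using gpar_\<alpha>_root(1) by blast
next
  fix v assume v: "v \<in> gverts Ab"
  have "{u \<in> c. gpar a u = Some (\<beta> v)} = \<alpha> ` {\<rho> \<in> groots A. cut_grafting \<rho> = v}"
  proof (intro equalityI subsetI)
    fix u assume u: "u \<in> {u \<in> c. gpar a u = Some (\<beta> v)}"
    then obtain \<rho> where \<rho>: "\<rho> \<in> groots A" "u = \<alpha> \<rho>"
      using image_\<alpha>_groots by blast
    then have "\<beta> (cut_grafting \<rho>) = \<beta> v"
      using gpar_\<alpha>_root(2)[OF \<rho>(1)] u by simp
    then have "cut_grafting \<rho> = v"
      using bij_\<beta> gpar_\<alpha>_root(1)[OF \<rho>(1)] v unfolding bij_betw_def inj_on_def by blast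
    then show "u \<in> \<alpha> ` {\<rho> \<in> groots A. cut_grafting \<rho> = v}"
      using \<rho> by blast
  qed (auto simp: gpar_\<alpha>_root(2) image_\<alpha>_groots[symmetric])
  moreover have "inj_on \<alpha> {\<rho> \<in> groots A. cut_grafting \<rho> = v}"
    by (rule inj_on_subset[of \<alpha> "gverts A"]) (use bij_\<alpha> in \<open>auto simp: bij_betw_def dest: groots_imp_gverts\<close>)
  ultimately have "card {\<rho> \<in> groots A. cut_grafting \<rho> = v} = card {u \<in> c. gpar a u = Some (\<beta> v)}"
    by (simp add: card_image)
  then show "card {\<rho> \<in> groots A. cut_grafting \<rho> = v} = gfree Ab v"
    using card_cut_edges_into_\<beta>[OF v] by simp
qed

lemma gpar_\<alpha>_nonroot:
  assumes v: "v \<in> gverts A" and "v \<notin> groots A"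
  shows "gpar a (\<alpha> v) = map_option \<alpha> (gpar A v)"
proof -
  have "\<alpha> v \<notin> c"
  proof
    assume "\<alpha> v \<in> c"
    then obtain \<rho> where "\<rho> \<in> groots A" "\<alpha> v = \<alpha> \<rho>"
      using image_\<alpha>_groots by blast
    then show False
      using bij_betw_imp_inj_on[OF bij_\<alpha>] v groots_imp_gverts[of \<rho> A] \<open>v \<notin> groots A\<close>
      unfolding inj_on_def by blast
  qed
  then show ?thesis
    using gpar_\<alpha>[OF v] unfolding prune_part_def by simp
qed

lemma gpar_\<beta>: "w \<in> gverts Ab \<Longrightarrow> gpar a (\<beta> w) = map_option \<beta> (gpar Ab w)"
  using iso_root unfolding giso_def root_part_free_def by simp

lemma giso_graft_cut_grafting: "giso (graft A Ab cut_grafting) a (case_sum \<alpha> \<beta>)"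
  unfolding giso_def graft_simps(1)
proof (intro conjI ballI)
  have "bij_betw (case_sum \<alpha> \<beta>) (Inl ` gverts A \<union> Inr ` gverts Ab)
      (cut_pverts a c \<union> (gverts a - cut_pverts a c))"
    using bij_\<alpha> bij_\<beta> by (rule bij_betw_case_sum) blast
  then show "bij_betw (case_sum \<alpha> \<beta>) (Inl ` gverts A \<union> Inr ` gverts Ab) (gverts a)"
    using cut_pverts_subset[of a c] by (simp add: Un_absorb1)
next
  fix x assume x: "x \<in> Inl ` gverts A \<union> Inr ` gverts Ab"
  show "gpar a (case_sum \<alpha> \<beta> x) = map_option (case_sum \<alpha> \<beta>) (gpar (graft A Ab cut_grafting) x)"
  proof (cases x)
    case (Inl v)
    then have v: "v \<in> gverts A"
      using x by auto
    show ?thesis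
    proof (cases "v \<in> groots A")
      case True
      then show ?thesis
        using gpar_\<alpha>_root(2) Inl by (simp add: graft_simps)
    next
      case False
      then show ?thesis
        using gpar_\<alpha>_nonroot[OF v False] Inl by (simp add: graft_simps option.map_comp comp_def)
    qed
  next
    case (Inr w)
    then show ?thesis
      using gpar_\<beta> x by (auto simp: graft_simps option.map_comp comp_def)
  qed
  show "gdec a (case_sum \<alpha> \<beta> x) = gdec (graft A Ab cut_grafting) x"
    using x iso_prune iso_root unfolding giso_def prune_part_def root_part_free_def by (auto simp: graft_simps)
  have "case_sum \<alpha> \<beta> x \<in> gverts a"
    using x bij_\<alpha> bij_\<beta> cut_pverts_subset[of a c] unfolding bij_betw_def by auto
  then show "gfree a (case_sum \<alpha> \<beta> x) = gfree (graft A Ab cut_grafting) x"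
    using no_free_a unfolding no_free_edges_def by (simp add: graft_simps)
qed


lemma image_restrict_case_sum_groots:
  "restrict (case_sum \<alpha> \<beta>) (Inl ` gverts A \<union> Inr ` gverts Ab) ` Inl ` groots A = c"
proof -
  have "restrict (case_sum \<alpha> \<beta>) (Inl ` gverts A \<union> Inr ` gverts Ab) ` Inl ` groots A
      = (restrict (case_sum \<alpha> \<beta>) (Inl ` gverts A \<union> Inr ` gverts Ab) \<circ> Inl) ` groots A"
    by (rule image_comp)
  also have "\<dots> = \<alpha> ` groots A"
    by (rule image_cong) (auto dest: groots_imp_gverts)
  finally show ?thesis
    using image_\<alpha>_groots by simp
qed

lemma restrict_case_sum_Inl:
  "restrict (restrict (case_sum \<alpha> \<beta>) (Inl ` gverts A \<union> Inr ` gverts Ab) \<circ> Inl) (gverts A) = \<alpha>"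
  using \<alpha>_isos by (auto simp: isos_def extensional_def)

lemma restrict_case_sum_Inr:
  "restrict (restrict (case_sum \<alpha> \<beta>) (Inl ` gverts A \<union> Inr ` gverts Ab) \<circ> Inr) (gverts Ab) = \<beta>"
  using \<beta>_isos by (auto simp: isos_def extensional_def)

end


lemma bij_betw_graftings_cuts:
  fixes A :: "('v, 'c) agraph" and Ab :: "('w, 'c) agraph" and a :: "('u, 'c) agraph"
  assumes forest_A: "is_forest A" and "no_free_edges A" and gwf_Ab: "gwf Ab" and "gwf a"
    and "no_free_edges a"
  shows "bij_betw
    (\<lambda>(g, f). (f ` Inl ` groots A, restrict (f \<circ> Inl) (gverts A), restrict (f \<circ> Inr) (gverts Ab)))
    (SIGMA g:graftings A Ab. isos (graft A Ab g) a)
    (SIGMA c:{c. admissible_cut a c}. isos A (prune_part a c) \<times> isos Ab (root_part_free a c))"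
    (is "bij_betw ?F ?X ?Y")
proof -
  let ?G = "\<lambda>(c, \<alpha>, \<beta>). (grafting_of_cut A Ab a \<alpha> \<beta>,
    restrict (case_sum \<alpha> \<beta>) (Inl ` gverts A \<union> Inr ` gverts Ab))"
  have gwf_A: "gwf A"
    using forest_A unfolding is_forest_def by simp
  have grafting_iso: "grafting_iso A Ab a g f" if "(g, f) \<in> ?X" for g f
    using assms that unfolding grafting_iso_def by simp
  have cut_iso: "cut_iso A Ab a c \<alpha> \<beta>" if "(c, \<alpha>, \<beta>) \<in> ?Y" for c \<alpha> \<beta>
    using assms that unfolding cut_iso_def by simp
  have "\<forall>p \<in> ?X. ?G (?F p) = p \<and> ?F p \<in> ?Y"
  proof
    fix p assume "p \<in> ?X"
    then obtain g f where p: "p = (g, f)" and "(g, f) \<in> ?X"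
      by (cases p) simp
    then interpret grafting_iso A Ab a g f
      by (intro grafting_iso)
    show "?G (?F p) = p \<and> ?F p \<in> ?Y"
      using grafting_of_cut_graft restrict_case_sum_f admissible_graft_cut
        restrict_in_isos[OF gwf_A giso_prune_part] restrict_in_isos[OF gwf_Ab giso_root_part_free]
      by (simp add: p)
  qed
  moreover have "\<forall>q \<in> ?Y. ?F (?G q) = q \<and> ?G q \<in> ?X"
  proof
    fix q assume "q \<in> ?Y"
    then obtain c \<alpha> \<beta> where q: "q = (c, \<alpha>, \<beta>)" and "(c, \<alpha>, \<beta>) \<in> ?Y"
      by (cases q) simp
    then interpret cut_iso A Ab a c \<alpha> \<beta>
      by (intro cut_iso)
    show "?F (?G q) = q \<and> ?G q \<in> ?X"
      using image_restrict_case_sum_groots restrict_case_sum_Inl restrict_case_sum_Inr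
        cut_grafting_in_graftings
        restrict_in_isos[OF gwf_graft[OF gwf_A gwf_Ab cut_grafting_in_graftings] giso_graft_cut_grafting]
      by (simp add: q graft_simps(1))
  qed
  ultimately show ?thesis
    by (intro bij_betw_byWitness[where f' = ?G]) auto
qed

section \<open>Double counting\<close>

lemma card_Sigma_if_const:
  assumes "finite I" and "\<And>i. i \<in> I \<Longrightarrow> finite (S i)"
    and "\<And>i. i \<in> I \<Longrightarrow> card (S i) = (if P i then k else 0)"
  shows "card (SIGMA i:I. S i) = card {i \<in> I. P i} * k"
proof -
  have "card (SIGMA i:I. S i) = (\<Sum>i \<in> I. if P i then k else 0)"
    using assms by simp
  also have "\<dots> = (\<Sum>i \<in> {i \<in> I. P i}. k)"
    by (rule sum.inter_filter[OF assms(1), symmetric])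
  finally show ?thesis
    by simp
qed

lemma card_Sigma_isos_cut_parts:
  assumes gwf_A: "gwf A" and gwf_Ab: "gwf Ab" and gwf_a: "gwf a"
  shows "card (SIGMA c:{c. admissible_cut a c}. isos A (prune_part a c) \<times> isos Ab (root_part_free a c))
    = card {c. admissible_cut a c \<and> gisomorphic (prune_part a c) A \<and> gisomorphic (root_part_free a c) Ab}
      * (sigma A * sigma Ab)"
proof -
  have fin: "finite (gverts A)" "finite (gverts Ab)" "finite (gverts a)"
    using assms unfolding gwf_def by simp_all
  have "card (SIGMA c:{c. admissible_cut a c}. isos A (prune_part a c) \<times> isos Ab (root_part_free a c))
    = card {c \<in> {c. admissible_cut a c}. gisomorphic (prune_part a c) A \<and> gisomorphic (root_part_free a c) Ab}
      * (sigma A * sigma Ab)"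
  proof (rule card_Sigma_if_const)
    fix c
    have gwf_parts: "gwf (prune_part a c)" "gwf (root_part_free a c)"
      using gwf_a by (simp_all add: gwf_prune_part gwf_root_part_free)
    have "gisomorphic A (prune_part a c) \<longleftrightarrow> gisomorphic (prune_part a c) A"
      and "gisomorphic Ab (root_part_free a c) \<longleftrightarrow> gisomorphic (root_part_free a c) Ab"
      using gisomorphic_sym[OF gwf_A] gisomorphic_sym[OF gwf_Ab] gisomorphic_sym[OF gwf_parts(1)]
        gisomorphic_sym[OF gwf_parts(2)] by blast+
    then show "card (isos A (prune_part a c) \<times> isos Ab (root_part_free a c))
      = (if gisomorphic (prune_part a c) A \<and> gisomorphic (root_part_free a c) Ab then sigma A * sigma Ab else 0)"
      by (simp add: card_cartesian_product card_isos_dom[OF gwf_A] card_isos_dom[OF gwf_Ab])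
    show "finite (isos A (prune_part a c) \<times> isos Ab (root_part_free a c))"
      using gwf_parts fin unfolding gwf_def by (simp add: finite_isos)
  qed (simp add: finite_admissible_cuts fin)
  then show ?thesis
    by simp
qed

lemma card_Sigma_isos_graft:
  assumes gwf_A: "gwf A" and gwf_Ab: "gwf Ab" and gwf_a: "gwf a"
  shows "card (SIGMA g:graftings A Ab. isos (graft A Ab g) a)
    = card {g \<in> graftings A Ab. gisomorphic (graft A Ab g) a} * sigma a"
proof (rule card_Sigma_if_const)
  fix g assume "g \<in> graftings A Ab"
  then have "gwf (graft A Ab g)"
    using gwf_A gwf_Ab by (rule gwf_graft[rotated 2])
  then show "card (isos (graft A Ab g) a) = (if gisomorphic (graft A Ab g) a then sigma a else 0)"
    using gwf_a by (rule card_isos_cod)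
  show "finite (isos (graft A Ab g) a)"
    using \<open>gwf (graft A Ab g)\<close> gwf_a unfolding gwf_def by (simp add: finite_isos)
qed (use assms in \<open>simp add: finite_graftings gwf_def\<close>)

lemma card_cuts_mult_sigma_eq:
  fixes A :: "('v, 'c) agraph" and Ab :: "('w, 'c) agraph" and a :: "('u, 'c) agraph"
  assumes forest_A: "is_forest A" and "no_free_edges A" and gwf_Ab: "gwf Ab" and gwf_a: "gwf a"
    and "no_free_edges a"
  shows "card {c. admissible_cut a c \<and> gisomorphic (prune_part a c) A
                  \<and> gisomorphic (root_part_free a c) Ab} * (sigma A * sigma Ab)
       = card {g \<in> graftings A Ab. gisomorphic (graft A Ab g) a} * sigma a"
proof -
  have gwf_A: "gwf A"
    using forest_A unfolding is_forest_def by simp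
  show ?thesis
    using bij_betw_same_card[OF bij_betw_graftings_cuts[OF assms]]
      card_Sigma_isos_cut_parts[OF gwf_A gwf_Ab gwf_a] card_Sigma_isos_graft[OF gwf_A gwf_Ab gwf_a]
    by simp
qed

theorem proposition4p12:
  fixes A :: "('v, 'c::finite) agraph" and Ab :: "('w, 'c) agraph" and a :: "('u, 'c) agraph"
    and r :: nat
  assumes "r \<ge> 1"
    and "is_forest A" and "card (groots A) = r" and "no_free_edges A"
    and "gwf Ab" and "num_free_edges Ab = r"
    and "gwf a" and "no_free_edges a"
    and "(is_aroma a \<and> is_aroma Ab) \<or> (is_aromatic_tree a \<and> is_aromatic_tree Ab)"
  shows "real (card {c. admissible_cut a c \<and> gisomorphic (prune_part a c) A
                          \<and> gisomorphic (root_part_free a c) Ab})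
         = real (sigma a) / (real (sigma A) * real (sigma Ab))
           * real (card {g \<in> graftings A Ab. gisomorphic (graft A Ab g) a})"
proof -
  have "sigma A > 0" and "sigma Ab > 0"
    using sigma_pos[of A] sigma_pos[OF assms(5)] assms(2) unfolding is_forest_def by simp_all
  moreover have "real (card {c. admissible_cut a c \<and> gisomorphic (prune_part a c) A
                          \<and> gisomorphic (root_part_free a c) Ab}) * (real (sigma A) * real (sigma Ab))
       = real (card {g \<in> graftings A Ab. gisomorphic (graft A Ab g) a}) * real (sigma a)"
    using arg_cong[OF card_cuts_mult_sigma_eq[OF assms(2,4,5,7,8)], of real] by simp
  ultimately show ?thesis
    by (simp add: field_simps)
qed

end
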